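(* Let $\alpha\ge0$, $2+2\alpha<p<2+\alpha+\sqrt{\alpha^2+\frac72\alpha+3}$ and $s\in[0,1]$. Assume that $$\int_0^1 I_t\left(\frac{2+\alpha}{p},1-\frac{2+\alpha}{p}\right)t^{2p-4\alpha-5}(1-t^4)^\alpha\,dt-\frac{1}{4(\alpha+1)}\le0.$$ Then $$B\left(\frac{2+\alpha}{p},1-\frac{2+\alpha}{p}\right)H_{\alpha,p}(s)\le\int_0^1\psi_{\alpha,p}(t)K_{\alpha,p}(s,t)\,dt.$$
   Context: $B(x,y)=\int_0^1 u^{x-1}(1-u)^{y-1}du$ is the Beta function, $B_t(x,y)=\int_0^t u^{x-1}(1-u)^{y-1}du$ and $I_t(x,y)=B_t(x,y)/B(x,y)$ the regularized incomplete Beta function. $\psi_{\alpha,p}(t)=t^{\frac{2+\alpha}{p}-1}(1-t)^{-\frac{2+\alpha}{p}}$ for $0<t<1$. $\binom{\alpha}{k}$ is the generalized binomial coefficient $\frac{\alpha(\alpha-1)\cdots(\alpha-k+1)}{k!}$, $\binom{\alpha}{0}=1$. $H_{\alpha,p}(s)=\sum_{k=0}^\infty\binom{\alpha}{k}(-1)^k\frac{1}{p-2\alpha-2+2k}-\frac{1}{2(\alpha+1)}(1-s^4)^{\alpha+1}$ for $0\le s\le1$, and $K_{\alpha,p}(s,t)=\sum_{k=0}^\infty\binom{\alpha}{k}(-1)^k\frac{1}{p-2\alpha-2+2k}\max\{s^2,t^2\}^{p-2\alpha-2+2k}$ for $0\le s\le1$, $0<t<1$. *)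

theory Defs
  imports "HOL-Analysis.Analysis"
begin

text \<open>Beta function: library Beta (Gamma quotient), equal to the Euler integral for positive arguments.
  Incomplete Beta function as a Lebesgue integral over the open interval (0,t).\<close>

definition Beta_inc :: "real \<Rightarrow> real \<Rightarrow> real \<Rightarrow> real" where
  "Beta_inc t x y = (LINT u:{0<..<t}|lborel. u powr (x - 1) * (1 - u) powr (y - 1))"

definition Beta_reg :: "real \<Rightarrow> real \<Rightarrow> real \<Rightarrow> real" where
  "Beta_reg t x y = Beta_inc t x y / Beta x y"

definition psi_ap :: "real \<Rightarrow> real \<Rightarrow> real \<Rightarrow> real" where
  "psi_ap \<alpha> p t = t powr ((2 + \<alpha>) / p - 1) * (1 - t) powr (- ((2 + \<alpha>) / p))"

definition H_ap :: "real \<Rightarrow> real \<Rightarrow> real \<Rightarrow> real" where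
  "H_ap \<alpha> p s = (\<Sum>k. (\<alpha> gchoose k) * (-1) ^ k * (1 / (p - 2 * \<alpha> - 2 + 2 * real k)))
      - 1 / (2 * (\<alpha> + 1)) * (1 - s ^ 4) powr (\<alpha> + 1)"

definition K_ap :: "real \<Rightarrow> real \<Rightarrow> real \<Rightarrow> real \<Rightarrow> real" where
  "K_ap \<alpha> p s t = (\<Sum>k. (\<alpha> gchoose k) * (-1) ^ k * (1 / (p - 2 * \<alpha> - 2 + 2 * real k))
      * max (s ^ 2) (t ^ 2) powr (p - 2 * \<alpha> - 2 + 2 * real k))"

end

theory Submission
  imports Defs
begin

text \<open>
  Put \<open>a = (2 + \<alpha>)/p\<close>, \<open>q = p - 2\<alpha> - 2 > 0\<close>, \<open>B = B(a, 1 - a)\<close>, and let \<open>S\<close> be the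
  antiderivative of \<open>r^(q-1) (1 - r^2)^\<alpha>\<close> vanishing at \<open>0\<close>, so that \<open>K(s,t) = S(max(s,t)^2)\<close> and
  \<open>H(s) = S(1) - (1 - s^4)^(\<alpha>+1) / (2(\<alpha>+1))\<close>. Splitting the integral at \<open>t = s\<close> turns the
  right-hand side into \<open>V(s) = S(s^2) B\<^sub>s + \<integral>\<^sub>s\<^sup>1 \<psi>(t) S(t^2) dt\<close>, and the difference
  \<open>\<Phi> = V - B H\<close> satisfies \<open>\<Phi>(1) = 0\<close> and \<open>\<Phi>'(s) = 2B (1 - s^4)^\<alpha> s^(2q-1) (I\<^sub>s - s^(4-2q))\<close>.

  The upper bound on \<open>p\<close> says exactly that \<open>a < 4 - 2q\<close>; then \<open>I\<^sub>t - t^(4-2q)\<close> changes sign at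
  most once on \<open>(0,1)\<close>, from \<open>+\<close> to \<open>-\<close>, so \<open>\<Phi>\<close> first increases and then decreases and
  \<open>\<Phi>(s) \<ge> min \<Phi>(0) \<Phi>(1)\<close>. Finally \<open>\<Phi>(0) = -\<integral>\<^sub>0\<^sup>1 \<Phi>'\<close> is \<open>2B\<close> times the negative of the
  quantity assumed to be nonpositive.
\<close>

definition one_minus_powr_coeff :: "real \<Rightarrow> nat \<Rightarrow> real" where
  "one_minus_powr_coeff \<alpha> k = (\<alpha> gchoose k) * (-1) ^ k"

lemma one_minus_powr_coeff_Suc:
  "one_minus_powr_coeff \<alpha> (Suc k) = one_minus_powr_coeff \<alpha> k * ((real k - \<alpha>) / (real k + 1))"
proof -
  have "\<alpha> * (\<alpha> gchoose k) = real k * (\<alpha> gchoose k) + real (Suc k) * (\<alpha> gchoose Suc k)"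
    by (rule gbinomial_mult_1)
  then have "(\<alpha> gchoose Suc k) = (\<alpha> gchoose k) * -((real k - \<alpha>) / (real k + 1))"
    by (simp add: field_simps)
  then show ?thesis
    by (simp add: one_minus_powr_coeff_def)
qed

lemma sums_one_minus_powr:
  assumes "\<bar>y\<bar> < 1"
  shows "(\<lambda>k. one_minus_powr_coeff \<alpha> k * y ^ k) sums ((1 - y) powr \<alpha>)"
proof -
  have "(\<lambda>k. (\<alpha> gchoose k) * (-y) ^ k) sums ((1 - y) powr \<alpha>)"
    using gen_binomial_real[of "-y" \<alpha>] assms by (simp only: add_uminus_conv_diff abs_minus_cancel)
  moreover have "(\<alpha> gchoose k) * (-y) ^ k = one_minus_powr_coeff \<alpha> k * y ^ k" for k
    by (simp only: one_minus_powr_coeff_def power_minus[of y] mult.assoc)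
  ultimately show ?thesis
    by simp
qed

lemma one_minus_powr_coeff_eventually_sign:
  obtains \<sigma> :: real where "\<bar>\<sigma>\<bar> = 1"
    and "\<And>k. nat \<lceil>\<alpha>\<rceil> \<le> k \<Longrightarrow> \<sigma> * one_minus_powr_coeff \<alpha> k = \<bar>one_minus_powr_coeff \<alpha> k\<bar>"
proof -
  define N where "N = nat \<lceil>\<alpha>\<rceil>"
  define \<sigma> :: real where "\<sigma> = (if one_minus_powr_coeff \<alpha> N \<ge> 0 then 1 else -1)"
  have "\<sigma> * one_minus_powr_coeff \<alpha> k = \<bar>one_minus_powr_coeff \<alpha> k\<bar>" if "N \<le> k" for k
    using that
  proof (induction k rule: dec_induct)
    case base
    show ?case by (simp add: \<sigma>_def)
  next
    case (step k)
    have "\<alpha> \<le> real k"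
      using step.hyps(1) unfolding N_def by linarith
    with step.IH show ?case
      by (simp add: one_minus_powr_coeff_Suc abs_mult mult.assoc[symmetric])
  qed
  moreover have "\<bar>\<sigma>\<bar> = 1"
    by (simp add: \<sigma>_def)
  ultimately show thesis
    using that unfolding N_def by blast
qed

lemma summable_of_bounded_power_partial_sums:
  fixes c :: "nat \<Rightarrow> real"
  assumes nonneg: "\<And>k. 0 \<le> c k"
    and bounded: "\<And>y n. 0 < y \<Longrightarrow> y < 1 \<Longrightarrow> (\<Sum>k<n. c k * y ^ k) \<le> A"
  shows "summable c"
proof (rule bounded_imp_summable[OF nonneg])
  fix n
  let ?P = "\<lambda>y::real. \<Sum>k<Suc n. c k * y ^ k"
  have "(?P \<longlongrightarrow> ?P 1) (at_left 1)"
    by (intro tendsto_intros)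
  moreover have "eventually (\<lambda>y. ?P y \<le> A) (at_left (1::real))"
    by (rule eventually_at_leftI[of 0]) (use bounded in \<open>auto simp del: sum.lessThan_Suc\<close>)
  ultimately have "?P 1 \<le> A"
    by (intro tendsto_upperbound) (auto simp: trivial_limit_at_left_real)
  then show "(\<Sum>k\<le>n. c k) \<le> A"
    by (simp add: lessThan_Suc_atMost)
qed

text \<open>From index \<open>\<lceil>\<alpha>\<rceil>\<close> on the coefficients have one sign, and their power series stays bounded
  as \<open>y \<rightarrow> 1\<close> because \<open>(1 - y)^\<alpha>\<close> does when \<open>\<alpha> \<ge> 0\<close>.\<close>
lemma summable_abs_one_minus_powr_coeff:
  assumes "0 \<le> \<alpha>"
  shows "summable (\<lambda>k. \<bar>one_minus_powr_coeff \<alpha> k\<bar>)"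
proof -
  let ?c = "one_minus_powr_coeff \<alpha>"
  define N where "N = nat \<lceil>\<alpha>\<rceil>"
  obtain \<sigma> :: real where \<sigma>: "\<bar>\<sigma>\<bar> = 1" and sign: "\<And>k. N \<le> k \<Longrightarrow> \<sigma> * ?c k = \<bar>?c k\<bar>"
    using one_minus_powr_coeff_eventually_sign[of \<alpha>] unfolding N_def by blast
  define tail where "tail k = (if N \<le> k then \<sigma> * ?c k else 0)" for k
  have tail_nonneg: "0 \<le> tail k" for k
    using sign[of k] by (simp add: tail_def)
  have summable_tail: "summable tail"
  proof (rule summable_of_bounded_power_partial_sums[OF tail_nonneg])
    fix y :: real and n assume y: "0 < y" "y < 1"
    have "(\<lambda>k. \<sigma> * (?c k * y ^ k - (if k \<in> {..<N} then ?c k * y ^ k else 0))) sums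
        (\<sigma> * ((1 - y) powr \<alpha> - (\<Sum>k<N. ?c k * y ^ k)))"
      using y by (intro sums_mult sums_diff sums_one_minus_powr sums_If_finite_set) auto
    moreover have "\<sigma> * (?c k * y ^ k - (if k \<in> {..<N} then ?c k * y ^ k else 0)) = tail k * y ^ k"
      for k by (simp add: tail_def)
    ultimately have tail_sums: "(\<lambda>k. tail k * y ^ k) sums (\<sigma> * ((1 - y) powr \<alpha> - (\<Sum>k<N. ?c k * y ^ k)))"
      by simp
    have "(\<Sum>k<n. tail k * y ^ k) \<le> (\<Sum>k. tail k * y ^ k)"
      using tail_sums y tail_nonneg by (intro sum_le_suminf) (auto simp: sums_iff)
    also have "\<dots> = \<sigma> * ((1 - y) powr \<alpha> - (\<Sum>k<N. ?c k * y ^ k))"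
      using tail_sums by (simp add: sums_iff)
    also have "\<dots> \<le> \<bar>(1 - y) powr \<alpha> - (\<Sum>k<N. ?c k * y ^ k)\<bar>"
      using \<sigma> abs_ge_self[of "\<sigma> * _"] by (simp add: abs_mult)
    also have "\<dots> \<le> \<bar>(1 - y) powr \<alpha>\<bar> + (\<Sum>k<N. \<bar>?c k * y ^ k\<bar>)"
      by (intro order.trans[OF abs_triangle_ineq4] add_left_mono sum_abs)
    also have "\<dots> \<le> 1 + (\<Sum>k<N. \<bar>?c k\<bar>)"
      using y assms
      by (intro add_mono sum_mono) (auto simp: powr_le1 abs_mult mult_left_le power_le_one)
    finally show "(\<Sum>k<n. tail k * y ^ k) \<le> 1 + (\<Sum>k<N. \<bar>?c k\<bar>)" .
  qed
  have "eventually (\<lambda>k. tail k = \<bar>?c k\<bar>) sequentially"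
    using sign by (auto simp: tail_def eventually_at_top_linorder)
  then have "summable tail = summable (\<lambda>k. \<bar>?c k\<bar>)"
    by (rule summable_cong)
  with summable_tail show ?thesis
    by simp
qed

text \<open>The termwise antiderivative of \<open>r^(q-1) (1 - r^2)^\<alpha>\<close>; the series in \<open>K_ap\<close> and \<open>H_ap\<close> are
  its values.\<close>
definition binom_antideriv :: "real \<Rightarrow> real \<Rightarrow> real \<Rightarrow> real" where
  "binom_antideriv \<alpha> q r =
     (\<Sum>k. one_minus_powr_coeff \<alpha> k / (q + 2 * real k) * r powr (q + 2 * real k))"

lemma binom_antideriv_term_bound:
  assumes "0 < q" "0 \<le> r" "r \<le> 1"
  shows "\<bar>one_minus_powr_coeff \<alpha> k / (q + 2 * real k) * r powr (q + 2 * real k)\<bar>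
           \<le> \<bar>one_minus_powr_coeff \<alpha> k\<bar> / q"
proof -
  have "\<bar>one_minus_powr_coeff \<alpha> k / (q + 2 * real k) * r powr (q + 2 * real k)\<bar>
      = \<bar>one_minus_powr_coeff \<alpha> k\<bar> / (q + 2 * real k) * r powr (q + 2 * real k)"
    using assms by (simp add: abs_mult)
  also have "\<dots> \<le> \<bar>one_minus_powr_coeff \<alpha> k\<bar> / q * 1"
    using assms by (intro mult_mono divide_left_mono powr_le1) auto
  finally show ?thesis by simp
qed

lemma summable_binom_antideriv_terms:
  assumes "0 \<le> \<alpha>" "0 < q" "0 \<le> r" "r \<le> 1"
  shows "summable (\<lambda>k. one_minus_powr_coeff \<alpha> k / (q + 2 * real k) * r powr (q + 2 * real k))"
proof (rule summable_comparison_test')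
  show "summable (\<lambda>k. \<bar>one_minus_powr_coeff \<alpha> k\<bar> / q)"
    by (intro summable_divide summable_abs_one_minus_powr_coeff assms(1))
  show "norm (one_minus_powr_coeff \<alpha> k / (q + 2 * real k) * r powr (q + 2 * real k))
      \<le> \<bar>one_minus_powr_coeff \<alpha> k\<bar> / q" for k
    using binom_antideriv_term_bound[OF assms(2-4)] by simp
qed

lemma continuous_on_binom_antideriv:
  assumes "0 \<le> \<alpha>" "0 < q"
  shows "continuous_on {0..1} (binom_antideriv \<alpha> q)"
proof -
  define f where "f k r = one_minus_powr_coeff \<alpha> k / (q + 2 * real k) * r powr (q + 2 * real k)"
    for k r
  have "uniform_limit {0..1} (\<lambda>n r. \<Sum>k<n. f k r) (\<lambda>r. \<Sum>k. f k r) sequentially"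
    using binom_antideriv_term_bound[OF assms(2)]
    by (intro Weierstrass_m_test[where M = "\<lambda>k. \<bar>one_minus_powr_coeff \<alpha> k\<bar> / q"]
        summable_divide summable_abs_one_minus_powr_coeff assms) (auto simp: f_def)
  moreover have "continuous_on {0..1} (\<lambda>r. \<Sum>k<n. f k r)" for n
    using assms unfolding f_def
    by (intro continuous_on_sum continuous_on_mult continuous_on_const continuous_on_powr'
        continuous_on_id) auto
  ultimately have "continuous_on {0..1} (\<lambda>r. \<Sum>k. f k r)"
    by (intro uniform_limit_theorem[where F = sequentially]) auto
  then show ?thesis
    by (simp add: binom_antideriv_def f_def[abs_def])
qed

lemma has_real_derivative_binom_antideriv_term:
  assumes "0 < q" "0 < x"
  shows "((\<lambda>r. c / (q + 2 * real k) * r powr (q + 2 * real k))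
           has_real_derivative x powr (q - 1) * (c * (x\<^sup>2) ^ k)) (at x)"
proof -
  have "q + 2 * real k > 0"
    using assms by auto
  with assms have "((\<lambda>r. c / (q + 2 * real k) * r powr (q + 2 * real k)) has_real_derivative
      c / (q + 2 * real k) * ((q + 2 * real k) * x powr (q + 2 * real k - 1))) (at x)"
    by (intro DERIV_cmult has_real_derivative_powr)
  moreover have "x powr (q + 2 * real k - 1) = x powr (q - 1) * (x\<^sup>2) ^ k"
  proof -
    have "x powr (q + 2 * real k - 1) = x powr (q - 1) * x powr real (2 * k)"
      by (simp add: powr_add[symmetric] algebra_simps)
    also have "x powr real (2 * k) = x ^ (2 * k)"
      using assms(2) by (rule powr_realpow)
    finally show ?thesis
      by (simp add: power_mult)
  qed
  ultimately show ?thesis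
    using \<open>q + 2 * real k > 0\<close> by (simp add: mult_ac)
qed

lemma powr_le_max_one_powr:
  fixes c x e :: real
  assumes "0 < c" "c \<le> x" "x \<le> 1"
  shows "x powr e \<le> max 1 (c powr e)"
proof (cases "0 \<le> e")
  case True
  with assms have "x powr e \<le> 1"
    by (intro powr_le1) auto
  then show ?thesis by simp
next
  case False
  with assms have "x powr e \<le> c powr e"
    by (intro powr_mono2') auto
  then show ?thesis by simp
qed

lemma has_real_derivative_binom_antideriv:
  assumes "0 \<le> \<alpha>" "0 < q" "0 < r" "r < 1"
  shows "(binom_antideriv \<alpha> q has_real_derivative r powr (q - 1) * (1 - r\<^sup>2) powr \<alpha>) (at r)"
proof -
  let ?c = "one_minus_powr_coeff \<alpha>"
  define f where "f k x = ?c k / (q + 2 * real k) * x powr (q + 2 * real k)" for k x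
  define f' where "f' k x = x powr (q - 1) * (?c k * (x\<^sup>2) ^ k)" for k x
  define M where "M = max 1 ((r / 2) powr (q - 1))"
  have f_deriv: "(f k has_field_derivative f' k x) (at x within {r/2..1})" if "x \<in> {r/2..1}" for k x
    unfolding f_def[abs_def] f'_def
    by (rule has_field_derivative_at_within, rule has_real_derivative_binom_antideriv_term)
       (use that assms in auto)
  have f'_bound: "norm (f' k x) \<le> \<bar>?c k\<bar> * M" if "x \<in> {r/2..1}" for k x
  proof -
    have "norm (f' k x) = \<bar>?c k\<bar> * (x powr (q - 1) * (x\<^sup>2) ^ k)"
      by (simp add: f'_def abs_mult mult_ac)
    also have "\<dots> \<le> \<bar>?c k\<bar> * (M * 1)"
      using that assms unfolding M_def
      by (intro mult_left_mono mult_mono powr_le_max_one_powr) (auto simp: power_le_one)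
    finally show ?thesis by simp
  qed
  have "summable (\<lambda>k. \<bar>?c k\<bar> * M)"
    by (intro summable_mult2 summable_abs_one_minus_powr_coeff assms(1))
  with f'_bound have "uniform_limit {r/2..1} (\<lambda>n x. \<Sum>k<n. f' k x) (\<lambda>x. \<Sum>k. f' k x) sequentially"
    by (rule Weierstrass_m_test)
  then have "uniformly_convergent_on {r/2..1} (\<lambda>n x. \<Sum>k<n. f' k x)"
    unfolding uniformly_convergent_on_def by blast
  moreover have "summable (\<lambda>k. f k r)"
    unfolding f_def using assms by (intro summable_binom_antideriv_terms) auto
  ultimately have "((\<lambda>x. \<Sum>k. f k x) has_field_derivative (\<Sum>k. f' k r)) (at r)"
    using assms by (intro has_field_derivative_series'(2)[OF _ f_deriv]) auto
  moreover have "(\<lambda>k. f' k r) sums (r powr (q - 1) * (1 - r\<^sup>2) powr \<alpha>)"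
    unfolding f'_def using assms
    by (intro sums_mult sums_one_minus_powr) (simp add: abs_square_less_1)
  moreover have "binom_antideriv \<alpha> q = (\<lambda>x. \<Sum>k. f k x)"
    by (simp add: binom_antideriv_def f_def fun_eq_iff)
  ultimately show ?thesis
    by (simp add: sums_iff)
qed

definition beta_kernel :: "real \<Rightarrow> real \<Rightarrow> real \<Rightarrow> real" where
  "beta_kernel x y t = t powr (x - 1) * (1 - t) powr (y - 1)"

lemma Beta_real_pos:
  fixes x y :: real
  assumes "0 < x" "0 < y"
  shows "0 < Beta x y"
  using assms by (simp add: Beta_def)

lemma beta_kernel_nonneg: "0 \<le> beta_kernel x y t"
  by (simp add: beta_kernel_def)

lemma isCont_beta_kernel:
  assumes "0 < t" "t < 1"
  shows "isCont (beta_kernel x y) t"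
  unfolding beta_kernel_def using assms by (intro continuous_intros) auto

lemma continuous_on_beta_kernel: "continuous_on {0<..<1} (beta_kernel x y)"
  by (intro continuous_at_imp_continuous_on ballI isCont_beta_kernel) auto

lemma beta_kernel_integrable_on:
  assumes "0 < x" "0 < y"
  shows "beta_kernel x y integrable_on {0..1}"
  using integrable_Beta'[OF assms] by (simp add: beta_kernel_def[abs_def])

lemma integral_beta_kernel:
  assumes "0 < x" "0 < y"
  shows "integral {0..1} (beta_kernel x y) = Beta x y"
  using has_integral_Beta_real[OF assms] by (simp add: beta_kernel_def[abs_def] integral_unique)

lemma Beta_inc_eq_integral:
  assumes "0 < x" "0 < y" "0 \<le> t" "t \<le> 1"
  shows "Beta_inc t x y = integral {0..t} (beta_kernel x y)"
proof -
  have "set_integrable lborel {0..1} (beta_kernel x y)"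
    using integrable_Beta[OF assms(1,2)] by (simp add: beta_kernel_def[abs_def])
  then have "set_integrable lborel {0<..<t} (beta_kernel x y)"
    by (rule set_integrable_subset) (use assms in auto)
  then have "Beta_inc t x y = integral {0<..<t} (beta_kernel x y)"
    unfolding Beta_inc_def beta_kernel_def[symmetric] by (rule set_borel_integral_eq_integral)
  then show ?thesis
    by (simp add: integral_open_interval_real)
qed

lemma Beta_inc_nonneg:
  assumes "0 < x" "0 < y" "0 \<le> t" "t \<le> 1"
  shows "0 \<le> Beta_inc t x y"
proof -
  have "beta_kernel x y integrable_on {0..t}"
    by (rule integrable_on_subinterval[OF beta_kernel_integrable_on[OF assms(1,2)]]) (use assms in auto)
  then show ?thesis
    using assms by (simp add: Beta_inc_eq_integral integral_nonneg beta_kernel_nonneg)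
qed

lemma Beta_inc_one:
  assumes "0 < x" "0 < y"
  shows "Beta_inc 1 x y = Beta x y"
  using assms by (simp add: Beta_inc_eq_integral integral_beta_kernel)

lemma Beta_inc_zero: "Beta_inc 0 x y = 0"
  by (simp add: Beta_inc_def set_lebesgue_integral_def)

lemma continuous_on_Beta_inc:
  assumes "0 < x" "0 < y"
  shows "continuous_on {0..1} (\<lambda>t. Beta_inc t x y)"
  using indefinite_integral_continuous_1[OF beta_kernel_integrable_on[OF assms]]
  by (rule continuous_on_eq) (use assms in \<open>simp add: Beta_inc_eq_integral\<close>)

lemma has_real_derivative_integral_upper:
  fixes f :: "real \<Rightarrow> real"
  assumes "f integrable_on {a..b}" "a < x" "x < b" "isCont f x"
  shows "((\<lambda>t. integral {a..t} f) has_real_derivative f x) (at x)"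
proof -
  have "((\<lambda>t. integral {a..t} f) has_vector_derivative f x) (at x within {a..b} - {})"
    using assms
    by (intro integral_has_vector_derivative_continuous_at) (auto intro: continuous_at_imp_continuous_at_within)
  then show ?thesis
    using assms by (simp add: at_within_Icc_at has_real_derivative_iff_has_vector_derivative)
qed

lemma has_real_derivative_Beta_inc:
  assumes "0 < x" "0 < y" "0 < t" "t < 1"
  shows "((\<lambda>t. Beta_inc t x y) has_real_derivative beta_kernel x y t) (at t)"
proof (rule has_field_derivative_transform_within_open)
  show "((\<lambda>t. integral {0..t} (beta_kernel x y)) has_real_derivative beta_kernel x y t) (at t)"
    using assms
    by (intro has_real_derivative_integral_upper[where b = 1] beta_kernel_integrable_on isCont_beta_kernel)
  show "integral {0..s} (beta_kernel x y) = Beta_inc s x y" if "s \<in> {0<..<1}" for s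
    using assms that by (simp add: Beta_inc_eq_integral)
qed (use assms in auto)

lemma min_endpoints_le_of_deriv_sign_change:
  fixes g g' :: "real \<Rightarrow> real"
  assumes "a \<le> s" "s \<le> b" and cont: "continuous_on {a..b} g"
    and deriv: "\<And>x. a < x \<Longrightarrow> x < b \<Longrightarrow> (g has_real_derivative g' x) (at x)"
    and sign: "\<And>x z. a < x \<Longrightarrow> x < z \<Longrightarrow> z < b \<Longrightarrow> g' x < 0 \<Longrightarrow> g' z \<le> 0"
  shows "min (g a) (g b) \<le> g s"
proof (cases "\<exists>t. a < t \<and> t \<le> s \<and> g' t < 0")
  case True
  then obtain t where t: "a < t" "t \<le> s" "g' t < 0"
    by blast
  have "g b \<le> g s"
  proof (rule DERIV_nonpos_imp_decreasing_open[of s b g])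
    fix x assume x: "s < x" "x < b"
    then show "\<exists>y. (g has_real_derivative y) (at x) \<and> y \<le> 0"
      using t deriv[of x] sign[of t x] by auto
  qed (use assms in \<open>auto intro: continuous_on_subset[OF cont]\<close>)
  then show ?thesis by simp
next
  case False
  have "g a \<le> g s"
  proof (rule DERIV_nonneg_imp_increasing_open[of a s g])
    fix x assume x: "a < x" "x < s"
    have "(g has_real_derivative g' x) (at x)"
      using x assms by (intro deriv) auto
    moreover have "0 \<le> g' x"
      using False x by (meson less_imp_le not_less)
    ultimately show "\<exists>y. (g has_real_derivative y) (at x) \<and> 0 \<le> y"
      by blast
  qed (use assms in \<open>auto intro: continuous_on_subset[OF cont]\<close>)
  then show ?thesis by simp
qed

lemma MVT_interior_deriv:
  fixes f f' :: "real \<Rightarrow> real"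
  assumes "a < b" "continuous_on {a..b} f"
    and "\<And>x. a < x \<Longrightarrow> x < b \<Longrightarrow> (f has_real_derivative f' x) (at x)"
  obtains z where "a < z" "z < b" "f b - f a = (b - a) * f' z"
proof -
  obtain l z where z: "a < z" "z < b" "(f has_real_derivative l) (at z)" "f b - f a = (b - a) * l"
    using MVT[OF assms(1,2)] assms(3) real_differentiable_def by blast
  have "l = f' z"
    by (rule DERIV_unique[OF z(3) assms(3)[OF z(1,2)]])
  with z that show ?thesis
    by blast
qed

lemma deriv_neg_pos_neg_of_sign_pattern:
  fixes \<phi> \<phi>' :: "real \<Rightarrow> real"
  assumes cont: "continuous_on {a..b} \<phi>"
    and deriv: "\<And>x. a < x \<Longrightarrow> x < b \<Longrightarrow> (\<phi> has_real_derivative \<phi>' x) (at x)"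
    and ends: "\<phi> a = 0" "\<phi> b = 0"
    and st: "a < s" "s < t" "t < b" "\<phi> s < 0" "0 < \<phi> t"
  obtains \<xi>0 \<xi>1 \<xi>2 where "a < \<xi>0" "\<xi>0 < \<xi>1" "\<xi>1 < \<xi>2" "\<xi>2 < b"
    and "\<phi>' \<xi>0 < 0" "0 < \<phi>' \<xi>1" "\<phi>' \<xi>2 < 0"
proof -
  have mvt: "\<exists>z. lo < z \<and> z < hi \<and> \<phi> hi - \<phi> lo = (hi - lo) * \<phi>' z"
    if "a \<le> lo" "lo < hi" "hi \<le> b" for lo hi
  proof -
    have "continuous_on {lo..hi} \<phi>"
      using that by (intro continuous_on_subset[OF cont]) auto
    moreover have "(\<phi> has_real_derivative \<phi>' z) (at z)" if "lo < z" "z < hi" for z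
      using that \<open>a \<le> lo\<close> \<open>hi \<le> b\<close> by (intro deriv) auto
    ultimately show ?thesis
      using MVT_interior_deriv[OF \<open>lo < hi\<close>] by metis
  qed
  obtain \<xi>0 where \<xi>0: "a < \<xi>0" "\<xi>0 < s" "\<phi> s - \<phi> a = (s - a) * \<phi>' \<xi>0"
    using mvt[of a s] st by auto
  obtain \<xi>1 where \<xi>1: "s < \<xi>1" "\<xi>1 < t" "\<phi> t - \<phi> s = (t - s) * \<phi>' \<xi>1"
    using mvt[of s t] st by auto
  obtain \<xi>2 where \<xi>2: "t < \<xi>2" "\<xi>2 < b" "\<phi> b - \<phi> t = (b - t) * \<phi>' \<xi>2"
    using mvt[of t b] st by auto
  have "(s - a) * \<phi>' \<xi>0 < 0" "0 < (t - s) * \<phi>' \<xi>1" "(b - t) * \<phi>' \<xi>2 < 0"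
    using \<xi>0 \<xi>1 \<xi>2 ends st by linarith+
  then have "\<phi>' \<xi>0 < 0" "0 < \<phi>' \<xi>1" "\<phi>' \<xi>2 < 0"
    using st by (simp_all add: mult_less_0_iff zero_less_mult_iff)
  with \<xi>0 \<xi>1 \<xi>2 st that show ?thesis
    by (meson order.strict_trans)
qed

text \<open>\<open>t (1 - t) L'(t)\<close> is affine in \<open>t\<close> and negative at \<open>0\<close>, so \<open>L'\<close> can only change sign
  from \<open>-\<close> to \<open>+\<close>.\<close>
lemma log_beta_ratio_quasiconvex:
  fixes x y m :: real
  assumes "x < m" "0 < t1" "t1 < t2" "t2 < t3" "t3 < 1"
  defines "L \<equiv> \<lambda>t. (x - m) * ln t + (y - 1) * ln (1 - t)"
  shows "L t2 \<le> max (L t1) (L t3)"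
proof -
  define L' where "L' t = (x - m) / t - (y - 1) / (1 - t)" for t
  define \<sigma> where "\<sigma> = m - x - y + 1"
  have L'_eq: "L' t = ((x - m) + \<sigma> * t) / (t * (1 - t))" if "0 < t" "t < 1" for t
    using that by (simp add: L'_def \<sigma>_def field_simps)
  have denom_pos: "0 < t * (1 - t)" if "0 < t" "t < 1" for t :: real
    using that by (intro mult_pos_pos) auto
  have "min (- L t1) (- L t3) \<le> - L t2"
  proof (rule min_endpoints_le_of_deriv_sign_change[where g = "\<lambda>t. - L t" and g' = "\<lambda>t. - L' t"
        and a = t1 and b = t3 and s = t2])
    show "continuous_on {t1..t3} (\<lambda>t. - L t)"
      using assms unfolding L_def by (intro continuous_intros) auto
    show "((\<lambda>t. - L t) has_real_derivative - L' t) (at t)" if "t1 < t" "t < t3" for t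
    proof -
      have t: "0 < t" "0 < 1 - t"
        using assms that by auto
      have "((\<lambda>t. ln (1 - t)) has_real_derivative 1 / (1 - t) * -1) (at t)"
        using t by (intro DERIV_chain2[OF DERIV_ln_divide] derivative_eq_intros) auto
      then have "(L has_real_derivative (x - m) * (1 / t) + (y - 1) * (1 / (1 - t) * -1)) (at t)"
        unfolding L_def using t by (intro DERIV_add DERIV_cmult DERIV_ln_divide)
      then have "(L has_real_derivative L' t) (at t)"
        by (simp add: L'_def)
      then show ?thesis
        by (rule DERIV_minus)
    qed
    fix u v assume uv: "t1 < u" "u < v" "v < t3" and "- L' u < 0"
    have u: "0 < u" "u < 1" and v: "0 < v" "v < 1"
      using assms uv by auto
    have "0 < (x - m) + \<sigma> * u"
      using \<open>- L' u < 0\<close> L'_eq[OF u] denom_pos[OF u] by (simp add: zero_less_divide_iff)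
    then have "0 < \<sigma>"
      using assms uv by (smt (verit) mult_nonpos_nonneg)
    then have "0 < (x - m) + \<sigma> * v"
      using \<open>0 < (x - m) + \<sigma> * u\<close> uv mult_strict_left_mono[of u v \<sigma>] by linarith
    then show "- L' v \<le> 0"
      using L'_eq[OF v] denom_pos[OF v] by (simp add: zero_less_divide_iff)
  qed (use assms in auto)
  then show ?thesis
    by linarith
qed

lemma beta_kernel_div_less_powr_iff:
  assumes "0 < r" "r < 1" "0 < B" "0 < m"
  shows "beta_kernel x y r / B < m * r powr (m - 1)
           \<longleftrightarrow> (x - m) * ln r + (y - 1) * ln (1 - r) < ln (B * m)"
    and "m * r powr (m - 1) < beta_kernel x y r / B
           \<longleftrightarrow> ln (B * m) < (x - m) * ln r + (y - 1) * ln (1 - r)"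
proof -
  have "0 < beta_kernel x y r / B" "0 < m * r powr (m - 1)"
    using assms by (simp_all add: beta_kernel_def)
  moreover have "ln (beta_kernel x y r / B) - ln (m * r powr (m - 1))
      = (x - m) * ln r + (y - 1) * ln (1 - r) - ln (B * m)"
    using assms by (simp add: beta_kernel_def ln_mult ln_div ln_powr algebra_simps)
  ultimately show "beta_kernel x y r / B < m * r powr (m - 1)
           \<longleftrightarrow> (x - m) * ln r + (y - 1) * ln (1 - r) < ln (B * m)"
    and "m * r powr (m - 1) < beta_kernel x y r / B
           \<longleftrightarrow> ln (B * m) < (x - m) * ln r + (y - 1) * ln (1 - r)"
    by (smt (verit) ln_less_cancel_iff)+
qed

text \<open>By the previous lemma the derivative of \<open>I\<^sub>t(x,y) - t\<^sup>m\<close> is negative exactly where a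
  quasiconvex function lies below a constant, so its sign pattern cannot be \<open>-, +, -\<close>, which a
  second crossing would force.\<close>
lemma Beta_reg_single_crossing:
  assumes "0 < x" "x < m" "0 < y" "0 < s" "s < t" "t < 1"
    and "Beta_reg s x y < s powr m"
  shows "Beta_reg t x y \<le> t powr m"
proof (rule ccontr)
  assume contra: "\<not> Beta_reg t x y \<le> t powr m"
  define B where "B = Beta x y"
  define \<phi> where "\<phi> r = Beta_inc r x y / B - r powr m" for r
  define \<phi>' where "\<phi>' r = beta_kernel x y r / B - m * r powr (m - 1)" for r
  define L where "L r = (x - m) * ln r + (y - 1) * ln (1 - r)" for r
  have B: "0 < B" and m: "0 < m"
    using assms Beta_real_pos by (auto simp: B_def)
  have "continuous_on {0..1} \<phi>"
    unfolding \<phi>_def using assms m B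
    by (intro continuous_on_diff continuous_on_divide continuous_on_const continuous_on_Beta_inc
        continuous_on_powr' continuous_on_id) auto
  moreover have "(\<phi> has_real_derivative \<phi>' r) (at r)" if "0 < r" "r < 1" for r
    unfolding \<phi>_def \<phi>'_def using assms that
    by (intro DERIV_diff DERIV_cdivide DERIV_cmult has_real_derivative_Beta_inc has_real_derivative_powr)
      auto
  moreover have "\<phi> 0 = 0" "\<phi> 1 = 0"
    using assms B m by (simp_all add: \<phi>_def Beta_inc_zero Beta_inc_one B_def)
  moreover have "\<phi> s < 0" "0 < \<phi> t"
    using assms contra by (simp_all add: \<phi>_def Beta_reg_def B_def)
  ultimately obtain \<xi>0 \<xi>1 \<xi>2 where \<xi>: "0 < \<xi>0" "\<xi>0 < \<xi>1" "\<xi>1 < \<xi>2" "\<xi>2 < 1"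
    and "\<phi>' \<xi>0 < 0" "0 < \<phi>' \<xi>1" "\<phi>' \<xi>2 < 0"
    using assms by (elim deriv_neg_pos_neg_of_sign_pattern) auto
  then have "L \<xi>0 < ln (B * m)" "ln (B * m) < L \<xi>1" "L \<xi>2 < ln (B * m)"
    using beta_kernel_div_less_powr_iff[OF _ _ B m] by (auto simp: \<phi>'_def L_def)
  moreover have "L \<xi>1 \<le> max (L \<xi>0) (L \<xi>2)"
    unfolding L_def by (rule log_beta_ratio_quasiconvex) (use assms \<xi> in auto)
  ultimately show False
    by linarith
qed

lemma set_lborel_integral_eq_integral_open:
  fixes f :: "real \<Rightarrow> real"
  assumes "f absolutely_integrable_on S" "continuous_on S f" "open S"
  shows "(LINT x:S|lborel. f x) = integral S f"
proof -
  have "(\<lambda>x. indicator S x *\<^sub>R f x) \<in> borel_measurable lborel"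
    using borel_measurable_continuous_on_indicator[OF borel_open[OF assms(3)] assms(2)]
    by (simp only: measurable_lborel2)
  with assms(1) have "set_integrable lborel S f"
    unfolding set_integrable_def absolutely_integrable_on_def using integrable_completion by blast
  then show ?thesis
    by (rule set_borel_integral_eq_integral)
qed

lemma integral_mult_continuous_Icc:
  fixes f g :: "real \<Rightarrow> real"
  assumes f: "continuous_on {a..b} f"
    and g: "g integrable_on {a..b}" "\<And>x. x \<in> {a<..<b} \<Longrightarrow> 0 \<le> g x" "continuous_on {a<..<b} g"
  shows "(\<lambda>x. g x * f x) integrable_on {a..b}"
    and "(LINT x:{a<..<b}|lborel. g x * f x) = integral {a..b} (\<lambda>x. g x * f x)"
proof -
  have "g integrable_on {a<..<b}"
    using g(1) by (simp add: integrable_on_open_interval_real)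
  then have "g absolutely_integrable_on {a<..<b}"
    using g(2) by (subst absolutely_integrable_on_iff_nonneg) auto
  moreover have "f \<in> borel_measurable (lebesgue_on {a<..<b})"
    using f by (intro continuous_imp_measurable_on_sets_lebesgue continuous_on_subset[OF f]) auto
  moreover have "bounded (f ` {a<..<b})"
    using compact_imp_bounded[OF compact_continuous_image[OF f compact_Icc]]
    by (rule bounded_subset) auto
  ultimately have "(\<lambda>x. f x * g x) absolutely_integrable_on {a<..<b}"
    by (intro absolutely_integrable_bounded_measurable_product_real) auto
  then have abs_int: "(\<lambda>x. g x * f x) absolutely_integrable_on {a<..<b}"
    by (simp add: mult.commute)
  then show "(\<lambda>x. g x * f x) integrable_on {a..b}"
    using integrable_on_open_interval_real set_lebesgue_integral_eq_integral(1)
    unfolding absolutely_integrable_on_def by blast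
  have "continuous_on {a<..<b} (\<lambda>x. g x * f x)"
    using f g by (intro continuous_intros continuous_on_subset[OF f]) auto
  with abs_int have "(LINT x:{a<..<b}|lborel. g x * f x) = integral {a<..<b} (\<lambda>x. g x * f x)"
    by (rule set_lborel_integral_eq_integral_open) auto
  then show "(LINT x:{a<..<b}|lborel. g x * f x) = integral {a..b} (\<lambda>x. g x * f x)"
    by (simp add: integral_open_interval_real)
qed

lemma integral_mult_max_split:
  fixes w f :: "real \<Rightarrow> real"
  assumes "a \<le> s" "s \<le> b" "w integrable_on {a..s}" "(\<lambda>t. w t * f t) integrable_on {s..b}"
  shows "integral {a..b} (\<lambda>t. w t * f (max s t))
           = f s * integral {a..s} w + integral {s..b} (\<lambda>t. w t * f t)"
proof -
  have left: "((\<lambda>t. w t * f (max s t)) has_integral f s * integral {a..s} w) {a..s}"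
  proof (rule has_integral_eq[where f = "\<lambda>t. f s * w t"])
    show "((\<lambda>t. f s * w t) has_integral f s * integral {a..s} w) {a..s}"
      using assms(3) by (intro has_integral_mult_right integrable_integral)
  qed (auto simp: max_absorb1 mult.commute)
  have right: "((\<lambda>t. w t * f (max s t)) has_integral integral {s..b} (\<lambda>t. w t * f t)) {s..b}"
  proof (rule has_integral_eq[where f = "\<lambda>t. w t * f t"])
    show "((\<lambda>t. w t * f t) has_integral integral {s..b} (\<lambda>t. w t * f t)) {s..b}"
      using assms(4) by (rule integrable_integral)
  qed (auto simp: max_absorb2)
  show ?thesis
    using has_integral_combine[OF assms(1,2) left right] by (rule integral_unique)
qed

text \<open>In \<open>f u * \<integral>\<^sub>a\<^sup>u w + \<integral>\<^sub>u\<^sup>b w f\<close> the two terms \<open>f(x) w(x)\<close> of the derivative cancel.\<close>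
lemma has_real_derivative_mult_integral_split:
  fixes w f :: "real \<Rightarrow> real"
  assumes w: "w integrable_on {a..b}" "isCont w x"
    and wf: "(\<lambda>t. w t * f t) integrable_on {a..b}"
    and f: "(f has_real_derivative f') (at x)"
    and x: "a < x" "x < b"
  shows "((\<lambda>u. f u * integral {a..u} w + integral {u..b} (\<lambda>t. w t * f t))
           has_real_derivative f' * integral {a..x} w) (at x)"
proof (rule has_field_derivative_transform_within_open)
  have "isCont (\<lambda>t. w t * f t) x"
    using w f by (intro continuous_mult DERIV_isCont[OF f]) auto
  then show "((\<lambda>u. f u * integral {a..u} w
      + (integral {a..b} (\<lambda>t. w t * f t) - integral {a..u} (\<lambda>t. w t * f t)))
      has_real_derivative f' * integral {a..x} w) (at x)"
    using assms
    by (auto intro!: derivative_eq_intros has_real_derivative_integral_upper[where b = b])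
  show "f u * integral {a..u} w + (integral {a..b} (\<lambda>t. w t * f t) - integral {a..u} (\<lambda>t. w t * f t))
      = f u * integral {a..u} w + integral {u..b} (\<lambda>t. w t * f t)" if "u \<in> {a<..<b}" for u
    using that Henstock_Kurzweil_Integration.integral_combine[where a = a and c = u and b = b, OF _ _ wf]
    by (simp add: algebra_simps)
qed (use x in auto)

locale beta_gap =
  fixes \<alpha> p :: real
  assumes alpha_nonneg: "0 \<le> \<alpha>" and p_gt: "2 + 2 * \<alpha> < p"
begin

definition a :: real where "a = (2 + \<alpha>) / p"

definition q :: real where "q = p - 2 * \<alpha> - 2"

lemma q_pos: "0 < q"
  using p_gt by (simp add: q_def)

lemma a_pos: "0 < a"
  using alpha_nonneg p_gt by (simp add: a_def)

lemma a_less_1: "a < 1"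
  using alpha_nonneg p_gt by (simp add: a_def divide_less_eq)

lemma Beta_a_pos: "0 < Beta a (1 - a)"
  using a_pos a_less_1 by (simp add: Beta_real_pos)

lemma psi_ap_eq: "psi_ap \<alpha> p t = beta_kernel a (1 - a) t"
  by (simp add: psi_ap_def beta_kernel_def a_def)

lemma K_ap_eq:
  assumes "0 \<le> s" "0 \<le> t"
  shows "K_ap \<alpha> p s t = binom_antideriv \<alpha> q ((max s t)\<^sup>2)"
proof -
  have "max (s\<^sup>2) (t\<^sup>2) = (max s t)\<^sup>2"
    using assms by (auto simp: max_def power_mono)
  then show ?thesis
    by (simp add: K_ap_def binom_antideriv_def one_minus_powr_coeff_def q_def)
qed

lemma H_ap_eq: "H_ap \<alpha> p s = binom_antideriv \<alpha> q 1 - (1 - s ^ 4) powr (\<alpha> + 1) / (2 * (\<alpha> + 1))"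
  by (simp add: H_ap_def binom_antideriv_def one_minus_powr_coeff_def q_def)

lemma continuous_on_antideriv_sq: "continuous_on {0..1} (\<lambda>u. binom_antideriv \<alpha> q (u\<^sup>2))"
  by (rule continuous_on_compose2[OF continuous_on_binom_antideriv[OF alpha_nonneg q_pos]])
     (auto intro!: continuous_intros simp: power_le_one)

lemma has_real_derivative_antideriv_sq:
  assumes "0 < x" "x < 1"
  shows "((\<lambda>u. binom_antideriv \<alpha> q (u\<^sup>2))
           has_real_derivative 2 * x powr (2 * q - 1) * (1 - x ^ 4) powr \<alpha>) (at x)"
proof -
  have "0 < x\<^sup>2" "x\<^sup>2 < 1"
    using assms by (auto simp: abs_square_less_1)
  then have "((\<lambda>u. binom_antideriv \<alpha> q (u\<^sup>2))
      has_real_derivative (x\<^sup>2) powr (q - 1) * (1 - (x\<^sup>2)\<^sup>2) powr \<alpha> * (2 * x)) (at x)"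
    by (intro DERIV_chain2[OF has_real_derivative_binom_antideriv[OF alpha_nonneg q_pos]])
       (auto intro!: derivative_eq_intros)
  moreover have "(x\<^sup>2) powr (q - 1) * (1 - (x\<^sup>2)\<^sup>2) powr \<alpha> * (2 * x)
      = 2 * x powr (2 * q - 1) * (1 - x ^ 4) powr \<alpha>"
  proof -
    have "(x\<^sup>2) powr (q - 1) * x = x powr (2 * (q - 1)) * x powr 1"
      using assms by (simp add: powr_powr flip: powr_numeral)
    also have "\<dots> = x powr (2 * q - 1)"
      by (simp only: powr_add[symmetric]) (simp add: algebra_simps)
    finally have "(x\<^sup>2) powr (q - 1) * x = x powr (2 * q - 1)" .
    moreover have "(x\<^sup>2)\<^sup>2 = x ^ 4"
      by (simp flip: power_mult)
    ultimately show ?thesis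
      by (simp add: algebra_simps)
  qed
  ultimately show ?thesis
    by (rule DERIV_cong)
qed

lemma integrable_kernel_antideriv_sq:
  "(\<lambda>t. beta_kernel a (1 - a) t * binom_antideriv \<alpha> q (t\<^sup>2)) integrable_on {0..1}"
  using a_pos a_less_1
  by (intro integral_mult_continuous_Icc(1) continuous_on_antideriv_sq beta_kernel_integrable_on
      beta_kernel_nonneg continuous_on_beta_kernel) auto

definition V :: "real \<Rightarrow> real" where
  "V s = binom_antideriv \<alpha> q (s\<^sup>2) * integral {0..s} (beta_kernel a (1 - a))
     + integral {s..1} (\<lambda>t. beta_kernel a (1 - a) t * binom_antideriv \<alpha> q (t\<^sup>2))"

lemma set_integral_psi_K_eq_V:
  assumes "0 \<le> s" "s \<le> 1"
  shows "(LINT t:{0<..<1}|lborel. psi_ap \<alpha> p t * K_ap \<alpha> p s t) = V s"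
proof -
  let ?w = "beta_kernel a (1 - a)" and ?f = "\<lambda>u. binom_antideriv \<alpha> q (u\<^sup>2)"
  have "(LINT t:{0<..<1}|lborel. psi_ap \<alpha> p t * K_ap \<alpha> p s t)
      = (LINT t:{0<..<1}|lborel. ?w t * ?f (max s t))"
    using assms by (intro set_lebesgue_integral_cong) (auto simp: psi_ap_eq K_ap_eq)
  also have "\<dots> = integral {0..1} (\<lambda>t. ?w t * ?f (max s t))"
    using a_pos a_less_1 assms
    by (intro integral_mult_continuous_Icc(2) continuous_on_compose2[OF continuous_on_antideriv_sq]
        continuous_intros beta_kernel_integrable_on beta_kernel_nonneg continuous_on_beta_kernel) auto
  also have "\<dots> = V s"
    unfolding V_def using assms a_pos a_less_1
    by (intro integral_mult_max_split integrable_on_subinterval[OF beta_kernel_integrable_on]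
        integrable_on_subinterval[OF integrable_kernel_antideriv_sq]) auto
  finally show ?thesis .
qed

lemma continuous_on_V: "continuous_on {0..1} V"
  unfolding V_def using a_pos a_less_1
  by (intro continuous_intros continuous_on_antideriv_sq indefinite_integral_continuous_1
      indefinite_integral_continuous_1' integrable_kernel_antideriv_sq beta_kernel_integrable_on) auto

lemma has_real_derivative_V:
  assumes "0 < x" "x < 1"
  shows "(V has_real_derivative 2 * x powr (2 * q - 1) * (1 - x ^ 4) powr \<alpha> * Beta_inc x a (1 - a))
           (at x)"
proof -
  have "(V has_real_derivative 2 * x powr (2 * q - 1) * (1 - x ^ 4) powr \<alpha>
      * integral {0..x} (beta_kernel a (1 - a))) (at x)"
    unfolding V_def[abs_def] using assms a_pos a_less_1
    by (intro has_real_derivative_mult_integral_split has_real_derivative_antideriv_sq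
        integrable_kernel_antideriv_sq beta_kernel_integrable_on isCont_beta_kernel) auto
  then show ?thesis
    using assms a_pos a_less_1 by (simp add: Beta_inc_eq_integral)
qed

definition gap :: "real \<Rightarrow> real" where
  "gap s = V s - Beta a (1 - a) * H_ap \<alpha> p s"

definition gap_deriv :: "real \<Rightarrow> real" where
  "gap_deriv x = 2 * Beta a (1 - a) * ((1 - x ^ 4) powr \<alpha> * x powr (2 * q - 1))
     * (Beta_reg x a (1 - a) - x powr (4 - 2 * q))"

lemma continuous_on_gap: "continuous_on {0..1} gap"
  unfolding gap_def[abs_def] H_ap_eq using alpha_nonneg
  by (intro continuous_intros continuous_on_V continuous_on_powr') (auto simp: power_le_one)

lemma has_real_derivative_gap:
  assumes "0 < x" "x < 1"
  shows "(gap has_real_derivative gap_deriv x) (at x)"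
proof -
  define B where "B = Beta a (1 - a)"
  let ?F = "(1 - x ^ 4) powr \<alpha>" and ?I = "Beta_inc x a (1 - a)"
  have "0 < 1 - x ^ 4"
    using assms by (simp add: power_less_one_iff)
  then have "((\<lambda>s. (1 - s ^ 4) powr (\<alpha> + 1)) has_real_derivative
      (\<alpha> + 1) * (1 - x ^ 4) powr (\<alpha> + 1 - 1) * (- (4 * x ^ 3))) (at x)"
    using DERIV_fun_powr[of "\<lambda>s. 1 - s ^ 4"] by (auto intro!: derivative_eq_intros)
  then have "(gap has_real_derivative
      2 * x powr (2 * q - 1) * ?F * ?I
      - B * (0 - (\<alpha> + 1) * (1 - x ^ 4) powr (\<alpha> + 1 - 1) * (- (4 * x ^ 3)) / (2 * (\<alpha> + 1)))) (at x)"
    unfolding gap_def[abs_def] H_ap_eq B_def[symmetric] using assms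
    by (intro DERIV_diff DERIV_cmult DERIV_cdivide DERIV_const has_real_derivative_V)
  moreover have "2 * x powr (2 * q - 1) * ?F * ?I
      - B * (0 - (\<alpha> + 1) * (1 - x ^ 4) powr (\<alpha> + 1 - 1) * (- (4 * x ^ 3)) / (2 * (\<alpha> + 1)))
      = 2 * (?F * x powr (2 * q - 1)) * ?I - 2 * B * ?F * x ^ 3"
    using alpha_nonneg by (simp add: field_simps)
  moreover have "x powr (2 * q - 1) * x powr (4 - 2 * q) = x ^ 3"
    using assms by (simp add: powr_add[symmetric] flip: powr_numeral)
  then have "gap_deriv x = 2 * (?F * x powr (2 * q - 1)) * ?I - 2 * B * ?F * x ^ 3"
    using Beta_a_pos
    by (simp add: gap_deriv_def Beta_reg_def B_def[symmetric] field_simps flip: \<open>_ = x ^ 3\<close>)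
  ultimately show ?thesis
    by (simp add: mult_ac)
qed

lemma gap_one: "gap 1 = 0"
  using a_pos a_less_1 by (simp add: gap_def V_def H_ap_eq integral_beta_kernel)

lemma a_less_exponent:
  assumes "p < 2 + \<alpha> + sqrt (\<alpha>\<^sup>2 + 7 / 2 * \<alpha> + 3)"
  shows "a < 4 - 2 * q"
proof -
  define u where "u = p - (2 + \<alpha>)"
  define X where "X = \<alpha>\<^sup>2 + 7 / 2 * \<alpha> + 3"
  have "0 \<le> u" "u < sqrt X" "0 \<le> X"
    using alpha_nonneg p_gt assms by (simp_all add: u_def X_def)
  then have "u\<^sup>2 < X"
    using real_sqrt_less_iff by (metis abs_of_nonneg real_sqrt_abs)
  moreover have "(4 - 2 * q) * p - (2 + \<alpha>) = 2 * (X - u\<^sup>2)"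
    by (simp add: q_def u_def X_def power2_eq_square algebra_simps)
  ultimately show ?thesis
    using p_gt alpha_nonneg by (simp add: a_def divide_less_eq mult.commute)
qed

lemma gap_deriv_sign_change:
  assumes "p < 2 + \<alpha> + sqrt (\<alpha>\<^sup>2 + 7 / 2 * \<alpha> + 3)"
    and xz: "0 < x" "x < z" "z < 1" and neg: "gap_deriv x < 0"
  shows "gap_deriv z \<le> 0"
proof -
  have factor_pos: "0 < 2 * Beta a (1 - a) * ((1 - t ^ 4) powr \<alpha> * t powr (2 * q - 1))"
    if "0 < t" "t < 1" for t
  proof -
    have "t ^ 4 < 1"
      using that by (simp add: power_less_one_iff)
    with that Beta_a_pos show ?thesis
      by (intro mult_pos_pos) auto
  qed
  have "Beta_reg x a (1 - a) < x powr (4 - 2 * q)"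
    using neg factor_pos[of x] xz Beta_a_pos by (simp add: gap_deriv_def mult_less_0_iff)
  then have "Beta_reg z a (1 - a) \<le> z powr (4 - 2 * q)"
    using a_pos a_less_1 a_less_exponent[OF assms(1)] xz
    by (intro Beta_reg_single_crossing[where s = x]) auto
  then show ?thesis
    using factor_pos[of z] xz by (simp add: gap_deriv_def mult_nonneg_nonpos)
qed

lemma V_one_minus_V_zero:
  "V 1 - V 0 = 2 * Beta a (1 - a) * (LINT t:{0<..<1}|lborel.
     Beta_reg t ((2 + \<alpha>) / p) (1 - (2 + \<alpha>) / p) * t powr (2 * p - 4 * \<alpha> - 5) * (1 - t ^ 4) powr \<alpha>)"
proof -
  define B where "B = Beta a (1 - a)"
  define G where "G t = Beta_reg t a (1 - a) * t powr (2 * q - 1) * (1 - t ^ 4) powr \<alpha>" for t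
  have "((\<lambda>t. 2 * t powr (2 * q - 1) * (1 - t ^ 4) powr \<alpha> * Beta_inc t a (1 - a))
      has_integral V 1 - V 0) {0..1}"
    using continuous_on_V has_real_derivative_V
    by (intro fundamental_theorem_of_calculus_interior)
       (auto simp: has_real_derivative_iff_has_vector_derivative[symmetric])
  moreover have "(\<lambda>t. 2 * B * G t)
      = (\<lambda>t. 2 * t powr (2 * q - 1) * (1 - t ^ 4) powr \<alpha> * Beta_inc t a (1 - a))"
    using Beta_a_pos by (simp add: fun_eq_iff G_def Beta_reg_def B_def)
  ultimately have "((\<lambda>t. 2 * B * G t) has_integral V 1 - V 0) {0<..<1}"
    by (simp add: has_integral_Icc_iff_Ioo)
  then have G_int: "(G has_integral (V 1 - V 0) / (2 * B)) {0<..<1}"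
    using has_integral_mult_right_iff[of "2 * B" G] Beta_a_pos by (simp add: B_def)
  have "G absolutely_integrable_on {0<..<1}"
    using G_int a_pos a_less_1
    by (subst absolutely_integrable_on_iff_nonneg)
       (auto simp: G_def Beta_reg_def intro!: divide_nonneg_pos mult_nonneg_nonneg Beta_inc_nonneg Beta_a_pos)
  moreover have "continuous_on {0<..<1} G"
    unfolding G_def Beta_reg_def using a_pos a_less_1 Beta_a_pos
    by (intro continuous_intros continuous_on_subset[OF continuous_on_Beta_inc])
       (auto dest: power_eq_1_iff)
  ultimately have "V 1 - V 0 = 2 * B * (LINT t:{0<..<1}|lborel. G t)"
    using G_int Beta_a_pos by (simp add: set_lborel_integral_eq_integral_open integral_unique B_def)
  moreover have "G = (\<lambda>t. Beta_reg t ((2 + \<alpha>) / p) (1 - (2 + \<alpha>) / p)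
      * t powr (2 * p - 4 * \<alpha> - 5) * (1 - t ^ 4) powr \<alpha>)"
    by (simp add: fun_eq_iff G_def a_def q_def algebra_simps)
  ultimately show ?thesis
    by (simp add: B_def)
qed

lemma gap_zero_nonneg:
  assumes "(LINT t:{0<..<1}|lborel.
      Beta_reg t ((2 + \<alpha>) / p) (1 - (2 + \<alpha>) / p) * t powr (2 * p - 4 * \<alpha> - 5)
      * (1 - t ^ 4) powr \<alpha>) - 1 / (4 * (\<alpha> + 1)) \<le> 0"
  shows "0 \<le> gap 0"
proof -
  let ?J = "LINT t:{0<..<1}|lborel.
      Beta_reg t ((2 + \<alpha>) / p) (1 - (2 + \<alpha>) / p) * t powr (2 * p - 4 * \<alpha> - 5) * (1 - t ^ 4) powr \<alpha>"
  have "2 * Beta a (1 - a) * ?J \<le> 2 * Beta a (1 - a) * (1 / (4 * (\<alpha> + 1)))"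
    using assms Beta_a_pos by (intro mult_left_mono) auto
  moreover have "gap 0 = V 0 - V 1 + 2 * Beta a (1 - a) * (1 / (4 * (\<alpha> + 1)))"
    using a_pos a_less_1 alpha_nonneg
    by (simp add: gap_def V_def H_ap_eq integral_beta_kernel field_simps)
  ultimately show ?thesis
    using V_one_minus_V_zero by linarith
qed

end

theorem lemma3p4:
  fixes \<alpha> p s :: real
  assumes "\<alpha> \<ge> 0"
    and "2 + 2 * \<alpha> < p"
    and "p < 2 + \<alpha> + sqrt (\<alpha>\<^sup>2 + 7 / 2 * \<alpha> + 3)"
    and "0 \<le> s" and "s \<le> 1"
    and "(LINT t:{0<..<1}|lborel.
            Beta_reg t ((2 + \<alpha>) / p) (1 - (2 + \<alpha>) / p) * t powr (2 * p - 4 * \<alpha> - 5)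
            * (1 - t ^ 4) powr \<alpha>) - 1 / (4 * (\<alpha> + 1)) \<le> 0"
  shows "Beta ((2 + \<alpha>) / p) (1 - (2 + \<alpha>) / p) * H_ap \<alpha> p s
           \<le> (LINT t:{0<..<1}|lborel. psi_ap \<alpha> p t * K_ap \<alpha> p s t)"
proof -
  interpret beta_gap \<alpha> p
    using assms(1,2) by unfold_locales
  have "min (gap 0) (gap 1) \<le> gap s"
    using assms(4,5) continuous_on_gap has_real_derivative_gap gap_deriv_sign_change[OF assms(3)]
    by (rule min_endpoints_le_of_deriv_sign_change)
  with gap_zero_nonneg[OF assms(6)] gap_one have "0 \<le> gap s"
    by simp
  then show ?thesis
    using set_integral_psi_K_eq_V[OF assms(4,5)] by (simp add: gap_def a_def)
qed

end
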